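(* Fix $p\in[1,\infty)$ and $r\in[0,\infty]$. For any metric spaces $X$ and $Y$, with $X\times Y$ carrying the maximum metric, there are homotopy equivalences $$\mathrm{VR}^m(X\times Y;r)\simeq \mathrm{VR}^m(X;r)\times \mathrm{VR}^m(Y;r),\qquad \check{C}^m(X\times Y;r)\simeq \check{C}^m(X;r)\times\check{C}^m(Y;r),$$ where the right-hand sides carry the maximum of the metrics of the two factors.
   Context: For a metric space $X$ and $r\in[0,\infty]$: the Vietoris–Rips complex $\mathrm{VR}(X;r)$ is the simplicial complex with vertex set $X$ whose simplices are the nonempty finite subsets of $X$ of diameter at most $r$; the Čech complex $\check{C}(X;r)$ is the simplicial complex with vertex set $X$ whose simplices are the nonempty finite subsets $\sigma\subseteq X$ with $\bigcap_{x\in\sigma}B_r(x)\neq\emptyset$, where $B_r(x)$ is the ball of radius $r$ about $x$ in $X$ (the statement holds with either open or closed balls, fixed throughout). For a simplicial complex $K$ with vertex set $X$, its metric thickening is the set of finitely supported probability measures $\mu=\sum_{i=1}^n\lambda_i\delta_{x_i}$ on $X$ (distinct $x_i$, $\lambda_i>0$, $\sum\lambda_i=1$) with $\{x_1,\dots,x_n\}\in K$, equipped with the $p$-Wasserstein metric $W_p(\mu,\nu)=\inf_\pi\left(\int_{X\times X}d(x,y)^p\,d\pi\right)^{1/p}$ (infimum over couplings $\pi$ of $\mu$ and $\nu$). $\mathrm{VR}^m(X;r)$ and $\check{C}^m(X;r)$ denote the metric thickenings of $\mathrm{VR}(X;r)$ and $\check{C}(X;r)$ respectively. *)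

theory Defs
  imports "HOL-Analysis.Analysis" "HOL-Probability.Probability"
begin

definition max_dist :: "('a \<Rightarrow> 'a \<Rightarrow> real) \<Rightarrow> ('b \<Rightarrow> 'b \<Rightarrow> real) \<Rightarrow> ('a \<times> 'b) \<Rightarrow> ('a \<times> 'b) \<Rightarrow> real"
  where "max_dist d1 d2 = (\<lambda>(x1, y1) (x2, y2). max (d1 x1 x2) (d2 y1 y2))"

definition VR_complex :: "'a set \<Rightarrow> ('a \<Rightarrow> 'a \<Rightarrow> real) \<Rightarrow> ereal \<Rightarrow> 'a set set"
  where "VR_complex M d r =
    {\<sigma>. \<sigma> \<noteq> {} \<and> finite \<sigma> \<and> \<sigma> \<subseteq> M \<and> (\<forall>x\<in>\<sigma>. \<forall>y\<in>\<sigma>. ereal (d x y) \<le> r)}"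

definition metric_ball :: "bool \<Rightarrow> 'a set \<Rightarrow> ('a \<Rightarrow> 'a \<Rightarrow> real) \<Rightarrow> 'a \<Rightarrow> ereal \<Rightarrow> 'a set"
  where "metric_ball cl M d x r =
    {y\<in>M. if cl then ereal (d x y) \<le> r else ereal (d x y) < r}"

definition Cech_complex :: "bool \<Rightarrow> 'a set \<Rightarrow> ('a \<Rightarrow> 'a \<Rightarrow> real) \<Rightarrow> ereal \<Rightarrow> 'a set set"
  where "Cech_complex cl M d r =
    {\<sigma>. \<sigma> \<noteq> {} \<and> finite \<sigma> \<and> \<sigma> \<subseteq> M \<and> (\<Inter>x\<in>\<sigma>. metric_ball cl M d x r) \<noteq> {}}"

definition wasserstein :: "real \<Rightarrow> ('a \<Rightarrow> 'a \<Rightarrow> real) \<Rightarrow> 'a pmf \<Rightarrow> 'a pmf \<Rightarrow> real"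
  where "wasserstein p d \<mu> \<nu> =
    (Inf {measure_pmf.expectation \<pi> (\<lambda>(x, y). d x y powr p) | \<pi>.
           map_pmf fst \<pi> = \<mu> \<and> map_pmf snd \<pi> = \<nu>}) powr (1 / p)"

definition metric_thickening :: "'a set set \<Rightarrow> 'a pmf set"
  where "metric_thickening K = {\<mu>. finite (set_pmf \<mu>) \<and> set_pmf \<mu> \<in> K}"

definition thickening_top :: "real \<Rightarrow> ('a \<Rightarrow> 'a \<Rightarrow> real) \<Rightarrow> 'a set set \<Rightarrow> 'a pmf topology"
  where "thickening_top p d K = Metric_space.mtopology (metric_thickening K) (wasserstein p d)"

definition prod_thickening_top ::
  "real \<Rightarrow> ('a \<Rightarrow> 'a \<Rightarrow> real) \<Rightarrow> 'a set set \<Rightarrow> ('b \<Rightarrow> 'b \<Rightarrow> real) \<Rightarrow> 'b set set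
    \<Rightarrow> ('a pmf \<times> 'b pmf) topology"
  where "prod_thickening_top p d1 K1 d2 K2 =
    Metric_space.mtopology (metric_thickening K1 \<times> metric_thickening K2)
      (max_dist (wasserstein p d1) (wasserstein p d2))"

end

theory Submission
  imports Defs
begin

(* The marginal map mu |-> (mu_X, mu_Y) and the product map (alpha, beta) |-> alpha \<otimes> beta are
   Lipschitz for the p-Wasserstein metrics (and the maximum metric on pairs), and the marginals of
   alpha \<otimes> beta are alpha and beta. In the other direction, the straight-line homotopy
   t mu + (1 - t) (mu_X \<otimes> mu_Y) joins the identity to the composite. It never leaves the thickening:
   if sigma is the support of mu, its support is sigma or pi_X sigma \<times> pi_Y sigma, and for the maximum
   metric the projections of a Vietoris-Rips (Cech) simplex and products of simplices are again
   simplices. *)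

section \<open>Convex combinations of distributions\<close>

definition mix_pmf :: "real \<Rightarrow> 'a pmf \<Rightarrow> 'a pmf \<Rightarrow> 'a pmf" where
  "mix_pmf t a b = bind_pmf (bernoulli_pmf t) (\<lambda>c. if c then a else b)"

lemma pmf_mix_pmf:
  "0 \<le> t \<Longrightarrow> t \<le> 1 \<Longrightarrow> pmf (mix_pmf t a b) x = t * pmf a x + (1 - t) * pmf b x"
  unfolding mix_pmf_def pmf_bind by simp

lemma set_pmf_mix_pmf:
  assumes "0 \<le> t" "t \<le> 1"
  shows "set_pmf (mix_pmf t a b) =
    (if t = 0 then set_pmf b else if t = 1 then set_pmf a else set_pmf a \<union> set_pmf b)"
  using assms by (auto simp: set_pmf_iff pmf_mix_pmf add_nonneg_eq_0_iff)

lemma mix_pmf_0 [simp]: "mix_pmf 0 a b = b"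
  by (rule pmf_eqI) (simp add: pmf_mix_pmf)

lemma mix_pmf_1 [simp]: "mix_pmf 1 a b = a"
  by (rule pmf_eqI) (simp add: pmf_mix_pmf)

lemma mix_pmf_same [simp]: "mix_pmf t a a = a"
  unfolding mix_pmf_def by simp

lemma map_pmf_mix_pmf: "map_pmf f (mix_pmf t a b) = mix_pmf t (map_pmf f a) (map_pmf f b)"
  unfolding mix_pmf_def map_bind_pmf by (simp add: if_distrib)

lemma mix_pmf_mix_pmf:
  assumes "0 \<le> t" "t \<le> s" "s \<le> 1" "t < 1"
  shows "mix_pmf s a b = mix_pmf ((s - t) / (1 - t)) a (mix_pmf t a b)"
proof (rule pmf_eqI)
  fix x
  define u where "u = (s - t) / (1 - t)"
  have u: "0 \<le> u" "u \<le> 1" "u * (1 - t) = s - t"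
    using assms by (auto simp: u_def field_simps)
  then have s_eq: "s = u + (1 - u) * t"
    by (simp add: algebra_simps)
  have "pmf (mix_pmf u a (mix_pmf t a b)) x = (u + (1 - u) * t) * pmf a x + (1 - (u + (1 - u) * t)) * pmf b x"
    using u(1,2) assms by (simp add: pmf_mix_pmf algebra_simps)
  also have "\<dots> = pmf (mix_pmf s a b) x"
    using assms by (simp add: pmf_mix_pmf flip: s_eq)
  finally show "pmf (mix_pmf s a b) x = pmf (mix_pmf ((s - t) / (1 - t)) a (mix_pmf t a b)) x"
    by (simp add: u_def)
qed

lemma expectation_finite_support:
  fixes f :: "'a \<Rightarrow> real"
  assumes "finite A" "set_pmf \<pi> \<subseteq> A"
  shows "measure_pmf.expectation \<pi> f = (\<Sum>x\<in>A. pmf \<pi> x * f x)"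
  using integral_measure_pmf[OF assms(1), of \<pi> f] assms by auto

lemma expectation_mono_finite_support:
  fixes f g :: "'a \<Rightarrow> real"
  assumes "finite (set_pmf \<pi>)" "\<And>x. x \<in> set_pmf \<pi> \<Longrightarrow> f x \<le> g x"
  shows "measure_pmf.expectation \<pi> f \<le> measure_pmf.expectation \<pi> g"
  using assms by (intro integral_mono_AE integrable_measure_pmf_finite AE_pmfI)

lemma expectation_mix_pmf:
  fixes f :: "'a \<Rightarrow> real"
  assumes "finite (set_pmf a)" "finite (set_pmf b)" "0 \<le> t" "t \<le> 1"
  shows "measure_pmf.expectation (mix_pmf t a b) f =
    t * measure_pmf.expectation a f + (1 - t) * measure_pmf.expectation b f"
proof -
  let ?A = "set_pmf a \<union> set_pmf b"
  have "measure_pmf.expectation (mix_pmf t a b) f = (\<Sum>x\<in>?A. pmf (mix_pmf t a b) x * f x)"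
    using assms by (intro expectation_finite_support) (auto simp: set_pmf_mix_pmf)
  also have "\<dots> = t * (\<Sum>x\<in>?A. pmf a x * f x) + (1 - t) * (\<Sum>x\<in>?A. pmf b x * f x)"
    using assms by (simp add: pmf_mix_pmf sum_distrib_left sum.distrib[symmetric] algebra_simps)
  also have "\<dots> = t * measure_pmf.expectation a f + (1 - t) * measure_pmf.expectation b f"
    using assms by (simp add: expectation_finite_support[of ?A])
  finally show ?thesis .
qed

section \<open>Minkowski's inequality\<close>

lemma convex_on_powr_nonneg:
  assumes "1 \<le> p"
  shows "convex_on {0..} (\<lambda>x::real. x powr p)"
proof
  fix t x y :: real
  assume t: "0 < t" "t < 1" and xy: "x \<in> {0..}" "y \<in> {0..}"
  have scaled: "(s * z) powr p \<le> s * z powr p" if "0 \<le> s" "s \<le> 1" "0 \<le> z" for s z :: real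
  proof -
    have "s powr p \<le> s"
      using that assms by (metis powr_one powr_mono')
    then show ?thesis
      using that by (simp add: powr_mult mult_right_mono)
  qed
  show "((1 - t) *\<^sub>R x + t *\<^sub>R y) powr p \<le> (1 - t) * x powr p + t * y powr p"
  proof (cases "x = 0 \<or> y = 0")
    case True
    then show ?thesis
      using scaled[of "1 - t" x] scaled[of t y] t xy by auto
  next
    case False
    then show ?thesis
      using convex_onD[OF powr_convex[OF assms], of t x y] t xy by auto
  qed
qed simp

(* Convexity of x powr p applied to a + b = (\<alpha> + \<beta>) (\<beta>/(\<alpha> + \<beta>) (b/\<beta>) + \<alpha>/(\<alpha> + \<beta>) (a/\<alpha>)). *)
lemma powr_add_le_weighted:
  fixes a b \<alpha> \<beta> p :: real
  assumes "0 \<le> a" "0 \<le> b" "0 < \<alpha>" "0 < \<beta>" "1 \<le> p"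
  shows "(a + b) powr p \<le> (\<alpha> + \<beta>) powr (p - 1) * (a powr p / \<alpha> powr (p - 1) + b powr p / \<beta> powr (p - 1))"
proof -
  define X where "X = \<alpha> + \<beta>"
  have X: "0 < X"
    using assms by (simp add: X_def)
  have rescale: "X powr p * (\<gamma> / X) * (c / \<gamma>) powr p = X powr (p - 1) * (c powr p / \<gamma> powr (p - 1))"
    if "0 < \<gamma>" "0 \<le> c" for \<gamma> c
  proof -
    have "X powr p / X = X powr (p - 1)" "\<gamma> powr p / \<gamma> = \<gamma> powr (p - 1)"
      using X that by (simp_all add: powr_diff)
    then show ?thesis
      using X that by (simp add: powr_divide field_simps)
  qed
  have complement: "1 - \<alpha> / X = \<beta> / X"
    using X by (simp add: X_def field_simps)
  have "a + b = X * ((1 - \<alpha> / X) * (b / \<beta>) + \<alpha> / X * (a / \<alpha>))"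
    using assms X unfolding complement by (simp add: field_simps)
  then have "(a + b) powr p = X powr p * ((1 - \<alpha> / X) * (b / \<beta>) + \<alpha> / X * (a / \<alpha>)) powr p"
    using assms X by (simp add: complement powr_mult)
  also have "\<dots> \<le> X powr p * ((1 - \<alpha> / X) * (b / \<beta>) powr p + \<alpha> / X * (a / \<alpha>) powr p)"
    using convex_onD[OF convex_on_powr_nonneg[OF assms(5)], of "\<alpha> / X" "b / \<beta>" "a / \<alpha>"] assms X
    by (intro mult_left_mono) (auto simp: X_def)
  also have "\<dots> = X powr p * (\<beta> / X) * (b / \<beta>) powr p + X powr p * (\<alpha> / X) * (a / \<alpha>) powr p"
    unfolding complement by (simp add: algebra_simps)
  also have "\<dots> = X powr (p - 1) * (a powr p / \<alpha> powr (p - 1) + b powr p / \<beta> powr (p - 1))"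
    unfolding rescale[OF assms(4,2)] rescale[OF assms(3,1)] by (simp add: algebra_simps)
  finally show ?thesis
    by (simp add: X_def)
qed

lemma Minkowski_weighted_sum:
  fixes w a b :: "'i \<Rightarrow> real"
  assumes A: "finite A" and p: "1 \<le> p"
    and nonneg: "\<And>i. i \<in> A \<Longrightarrow> 0 \<le> w i" "\<And>i. i \<in> A \<Longrightarrow> 0 \<le> a i" "\<And>i. i \<in> A \<Longrightarrow> 0 \<le> b i"
  shows "(\<Sum>i\<in>A. w i * (a i + b i) powr p) powr (1/p)
    \<le> (\<Sum>i\<in>A. w i * a i powr p) powr (1/p) + (\<Sum>i\<in>A. w i * b i powr p) powr (1/p)"
proof -
  define SA where "SA = (\<Sum>i\<in>A. w i * a i powr p)"
  define SB where "SB = (\<Sum>i\<in>A. w i * b i powr p)"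
  define \<alpha> where "\<alpha> = SA powr (1/p)"
  define \<beta> where "\<beta> = SB powr (1/p)"
  have "0 \<le> SA" "0 \<le> SB"
    unfolding SA_def SB_def using nonneg by (auto intro!: sum_nonneg)
  then have SA: "SA = \<alpha> powr p" and SB: "SB = \<beta> powr p"
    using p by (simp_all add: \<alpha>_def \<beta>_def powr_powr)
  have vanish: "(\<Sum>i\<in>A. w i * (a i + b i) powr p) = (\<Sum>i\<in>A. w i * c i powr p)"
    if "(\<Sum>i\<in>A. w i * e i powr p) = 0" "c = a \<and> e = b \<or> c = b \<and> e = a" for c e
  proof (rule sum.cong)
    fix i assume "i \<in> A"
    moreover have "\<forall>i\<in>A. w i * e i powr p = 0"
      using that nonneg A by (subst sum_nonneg_eq_0_iff[symmetric]) auto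
    ultimately show "w i * (a i + b i) powr p = w i * c i powr p"
      using that(2) by auto
  qed simp
  show ?thesis
  proof (cases "\<alpha> = 0 \<or> \<beta> = 0")
    case True
    then show ?thesis
      using vanish[of a b] vanish[of b a] p SA SB
      by (auto simp: SA_def[symmetric] SB_def[symmetric] \<alpha>_def[symmetric] \<beta>_def[symmetric])
  next
    case False
    then have pos: "0 < \<alpha>" "0 < \<beta>"
      by (auto simp: \<alpha>_def \<beta>_def)
    have "(\<Sum>i\<in>A. w i * (a i + b i) powr p)
        \<le> (\<Sum>i\<in>A. w i * ((\<alpha> + \<beta>) powr (p - 1) * (a i powr p / \<alpha> powr (p - 1) + b i powr p / \<beta> powr (p - 1))))"
      using nonneg pos p by (intro sum_mono mult_left_mono powr_add_le_weighted) auto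
    also have "\<dots> = (\<alpha> + \<beta>) powr (p - 1) * (SA / \<alpha> powr (p - 1) + SB / \<beta> powr (p - 1))"
      by (simp add: SA_def SB_def sum_distrib_left sum_divide_distrib sum.distrib algebra_simps)
    also have "\<dots> = (\<alpha> + \<beta>) powr p"
      using pos by (simp add: SA SB powr_diff field_simps)
    finally have "(\<Sum>i\<in>A. w i * (a i + b i) powr p) powr (1/p) \<le> ((\<alpha> + \<beta>) powr p) powr (1/p)"
      using p by (intro powr_mono2) (auto intro!: sum_nonneg simp: nonneg)
    then show ?thesis
      using pos p by (simp add: powr_powr \<alpha>_def \<beta>_def SA_def SB_def)
  qed
qed

lemma Minkowski_expectation:
  fixes f g :: "'a \<Rightarrow> real"
  assumes "finite (set_pmf \<pi>)" "1 \<le> p"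
    and "\<And>x. x \<in> set_pmf \<pi> \<Longrightarrow> 0 \<le> f x" "\<And>x. x \<in> set_pmf \<pi> \<Longrightarrow> 0 \<le> g x"
  shows "measure_pmf.expectation \<pi> (\<lambda>x. (f x + g x) powr p) powr (1/p)
    \<le> measure_pmf.expectation \<pi> (\<lambda>x. f x powr p) powr (1/p)
     + measure_pmf.expectation \<pi> (\<lambda>x. g x powr p) powr (1/p)"
  using Minkowski_weighted_sum[of "set_pmf \<pi>" p "pmf \<pi>" f g] assms
  by (simp add: expectation_finite_support[OF assms(1)])

section \<open>Optimal transport cost\<close>

abbreviation coupling_cost :: "real \<Rightarrow> ('a \<Rightarrow> 'a \<Rightarrow> real) \<Rightarrow> ('a \<times> 'a) pmf \<Rightarrow> real" where
  "coupling_cost p d \<pi> \<equiv> measure_pmf.expectation \<pi> (\<lambda>(x, y). d x y powr p)"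

definition transport_cost :: "real \<Rightarrow> ('a \<Rightarrow> 'a \<Rightarrow> real) \<Rightarrow> 'a pmf \<Rightarrow> 'a pmf \<Rightarrow> real" where
  "transport_cost p d \<mu> \<nu> =
    Inf {coupling_cost p d \<pi> | \<pi>. map_pmf fst \<pi> = \<mu> \<and> map_pmf snd \<pi> = \<nu>}"

lemma wasserstein_eq_transport_cost: "wasserstein p d \<mu> \<nu> = transport_cost p d \<mu> \<nu> powr (1/p)"
  unfolding wasserstein_def transport_cost_def ..

lemma wasserstein_nonneg [simp]: "0 \<le> wasserstein p d \<mu> \<nu>"
  by (simp add: wasserstein_eq_transport_cost)

lemma coupling_cost_nonneg: "0 \<le> coupling_cost p d \<pi>"
  by (rule integral_nonneg_AE) (auto simp: split_beta)

lemma couplings_nonempty: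
  "{coupling_cost p d \<pi> | \<pi>. map_pmf fst \<pi> = \<mu> \<and> map_pmf snd \<pi> = \<nu>} \<noteq> {}"
  using map_fst_pair_pmf[of \<mu> \<nu>] map_snd_pair_pmf[of \<mu> \<nu>] by blast

lemma transport_cost_le_coupling_cost:
  "map_pmf fst \<pi> = \<mu> \<Longrightarrow> map_pmf snd \<pi> = \<nu> \<Longrightarrow> transport_cost p d \<mu> \<nu> \<le> coupling_cost p d \<pi>"
  unfolding transport_cost_def by (rule cInf_lower) (auto intro!: bdd_belowI[of _ 0] coupling_cost_nonneg)

lemma transport_cost_nonneg: "0 \<le> transport_cost p d \<mu> \<nu>"
  unfolding transport_cost_def by (rule cInf_greatest[OF couplings_nonempty]) (auto intro!: coupling_cost_nonneg)

lemma transport_cost_greatest: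
  assumes "\<And>\<pi>. map_pmf fst \<pi> = \<mu> \<Longrightarrow> map_pmf snd \<pi> = \<nu> \<Longrightarrow> B \<le> coupling_cost p d \<pi>"
  shows "B \<le> transport_cost p d \<mu> \<nu>"
  unfolding transport_cost_def by (rule cInf_greatest[OF couplings_nonempty]) (use assms in auto)

lemma transport_cost_less_iff:
  "transport_cost p d \<mu> \<nu> < c \<longleftrightarrow>
    (\<exists>\<pi>. map_pmf fst \<pi> = \<mu> \<and> map_pmf snd \<pi> = \<nu> \<and> coupling_cost p d \<pi> < c)"
  unfolding transport_cost_def
  by (subst cInf_less_iff[OF couplings_nonempty]) (auto intro!: bdd_belowI[of _ 0] coupling_cost_nonneg)

lemma transport_cost_le_epsilon:
  assumes "\<And>e. 0 < e \<Longrightarrow>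
    \<exists>\<pi>. map_pmf fst \<pi> = \<mu> \<and> map_pmf snd \<pi> = \<nu> \<and> coupling_cost p d \<pi> \<le> B + e"
  shows "transport_cost p d \<mu> \<nu> \<le> B"
proof (rule field_le_epsilon)
  fix e :: real
  assume "0 < e"
  with assms obtain \<pi> where "map_pmf fst \<pi> = \<mu>" "map_pmf snd \<pi> = \<nu>" "coupling_cost p d \<pi> \<le> B + e"
    by blast
  then show "transport_cost p d \<mu> \<nu> \<le> B + e"
    using transport_cost_le_coupling_cost[of \<pi> \<mu> \<nu> p d] by linarith
qed

lemma set_pmf_coupling_subset:
  "map_pmf fst \<pi> = \<mu> \<Longrightarrow> map_pmf snd \<pi> = \<nu> \<Longrightarrow> set_pmf \<pi> \<subseteq> set_pmf \<mu> \<times> set_pmf \<nu>"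
  by force

lemma finite_set_pmf_coupling:
  assumes "map_pmf fst \<pi> = \<mu>" "map_pmf snd \<pi> = \<nu>" "finite (set_pmf \<mu>)" "finite (set_pmf \<nu>)"
  shows "finite (set_pmf \<pi>)"
  using set_pmf_coupling_subset[OF assms(1,2)] assms(3,4) by (meson finite_SigmaI finite_subset)

lemma transport_cost_eq_wasserstein_powr:
  "0 < p \<Longrightarrow> transport_cost p d \<mu> \<nu> = wasserstein p d \<mu> \<nu> powr p"
  by (simp add: wasserstein_eq_transport_cost powr_powr transport_cost_nonneg)

lemma wasserstein_less_iff:
  assumes "0 < e" "0 < p"
  shows "wasserstein p d \<mu> \<nu> < e \<longleftrightarrow> transport_cost p d \<mu> \<nu> < e powr p"
proof
  assume "wasserstein p d \<mu> \<nu> < e"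
  then show "transport_cost p d \<mu> \<nu> < e powr p"
    using assms by (simp add: transport_cost_eq_wasserstein_powr powr_less_mono2)
next
  assume "transport_cost p d \<mu> \<nu> < e powr p"
  then show "wasserstein p d \<mu> \<nu> < e"
    using assms powr_mono2[of p e "wasserstein p d \<mu> \<nu>"]
    by (auto simp: transport_cost_eq_wasserstein_powr not_less[symmetric])
qed

lemma wasserstein_le_iff:
  assumes "0 \<le> m" "0 < p"
  shows "wasserstein p d \<mu> \<nu> \<le> m \<longleftrightarrow> transport_cost p d \<mu> \<nu> \<le> m powr p"
  using assms powr_mono2[of p "wasserstein p d \<mu> \<nu>" m] powr_less_mono2[of p m "wasserstein p d \<mu> \<nu>"]
  by (auto simp: transport_cost_eq_wasserstein_powr not_le[symmetric])

lemma wasserstein_mono: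
  "transport_cost p d \<mu> \<nu> \<le> transport_cost p d' \<mu>' \<nu>' \<Longrightarrow> 0 < p \<Longrightarrow>
    wasserstein p d \<mu> \<nu> \<le> wasserstein p d' \<mu>' \<nu>'"
  unfolding wasserstein_eq_transport_cost by (intro powr_mono2) (auto simp: transport_cost_nonneg)

section \<open>The Wasserstein metric on finitely supported distributions\<close>

lemma exists_coupling_cost_powr_less:
  assumes "0 < e" "0 < p"
  shows "\<exists>\<pi>. map_pmf fst \<pi> = \<mu> \<and> map_pmf snd \<pi> = \<nu> \<and>
    coupling_cost p d \<pi> powr (1/p) < wasserstein p d \<mu> \<nu> + e"
proof -
  have pos: "0 < wasserstein p d \<mu> \<nu> + e"
    using assms(1) wasserstein_nonneg[of p d \<mu> \<nu>] by linarith
  then have "transport_cost p d \<mu> \<nu> < (wasserstein p d \<mu> \<nu> + e) powr p"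
    using wasserstein_less_iff[OF pos assms(2), of d \<mu> \<nu>] assms(1) by simp
  then obtain \<pi> where \<pi>: "map_pmf fst \<pi> = \<mu>" "map_pmf snd \<pi> = \<nu>"
    and "coupling_cost p d \<pi> < (wasserstein p d \<mu> \<nu> + e) powr p"
    by (auto simp: transport_cost_less_iff)
  then have "coupling_cost p d \<pi> powr (1/p) < ((wasserstein p d \<mu> \<nu> + e) powr p) powr (1/p)"
    using assms by (intro powr_less_mono2) (auto simp: coupling_cost_nonneg)
  with \<pi> pos assms show ?thesis
    by (auto simp: powr_powr)
qed

lemma transport_cost_commute:
  assumes "\<And>x y. d x y = d y x"
  shows "transport_cost p d \<mu> \<nu> = transport_cost p d \<nu> \<mu>"
proof -
  have swap: "transport_cost p d a b \<le> transport_cost p d b a" for a b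
  proof (rule transport_cost_greatest)
    fix \<pi>
    assume \<pi>: "map_pmf fst \<pi> = b" "map_pmf snd \<pi> = a"
    have "transport_cost p d a b \<le> coupling_cost p d (map_pmf prod.swap \<pi>)"
      using \<pi> by (intro transport_cost_le_coupling_cost) (simp_all add: pmf.map_comp comp_def)
    also have "coupling_cost p d (map_pmf prod.swap \<pi>) = coupling_cost p d \<pi>"
      by (simp add: case_prod_unfold assms)
    finally show "transport_cost p d a b \<le> coupling_cost p d \<pi>" .
  qed
  show ?thesis
    using swap[of \<mu> \<nu>] swap[of \<nu> \<mu>] by simp
qed

lemma coupling_gluing:
  assumes "map_pmf snd \<pi>1 = \<nu>" "map_pmf fst \<pi>2 = \<nu>"
  obtains P where "map_pmf fst P = \<pi>1" "map_pmf snd P = \<pi>2"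
    "\<And>q. q \<in> set_pmf P \<Longrightarrow> snd (fst q) = fst (snd q)"
proof -
  have "rel_pmf (\<lambda>q y. snd q = y) \<pi>1 \<nu>"
    by (rule rel_pmf.intros[where pq="map_pmf (\<lambda>q. (q, snd q)) \<pi>1"])
      (auto simp: pmf.map_comp comp_def assms)
  moreover have "rel_pmf (\<lambda>y q. y = fst q) \<nu> \<pi>2"
    by (rule rel_pmf.intros[where pq="map_pmf (\<lambda>q. (fst q, q)) \<pi>2"])
      (auto simp: pmf.map_comp comp_def assms)
  ultimately have "rel_pmf ((\<lambda>q y. snd q = y) OO (\<lambda>y q. y = fst q)) \<pi>1 \<pi>2"
    unfolding pmf.rel_compp relcompp_apply by blast
  then show thesis
    by (cases rule: rel_pmf.cases) (use that in fastforce)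
qed

definition finite_pmfs :: "'a set \<Rightarrow> 'a pmf set" where
  "finite_pmfs S = {\<mu>. finite (set_pmf \<mu>) \<and> set_pmf \<mu> \<subseteq> S}"

(* Glue the two couplings along \<nu> and apply Minkowski's inequality to the glued coupling. *)
lemma wasserstein_le_coupling_costs:
  assumes S: "Metric_space S d" and p: "1 \<le> p"
    and fin: "\<mu> \<in> finite_pmfs S" "\<nu> \<in> finite_pmfs S" "\<rho> \<in> finite_pmfs S"
    and \<pi>1: "map_pmf fst \<pi>1 = \<mu>" "map_pmf snd \<pi>1 = \<nu>"
    and \<pi>2: "map_pmf fst \<pi>2 = \<nu>" "map_pmf snd \<pi>2 = \<rho>"
  shows "wasserstein p d \<mu> \<rho> \<le> coupling_cost p d \<pi>1 powr (1/p) + coupling_cost p d \<pi>2 powr (1/p)"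
proof -
  interpret Metric_space S d by (rule S)
  obtain P where P: "map_pmf fst P = \<pi>1" "map_pmf snd P = \<pi>2"
    and glued: "\<And>q. q \<in> set_pmf P \<Longrightarrow> snd (fst q) = fst (snd q)"
    using coupling_gluing[OF \<pi>1(2) \<pi>2(1)] by blast
  have "finite (set_pmf \<pi>1)" "finite (set_pmf \<pi>2)"
    using finite_set_pmf_coupling \<pi>1 \<pi>2 fin by (auto simp: finite_pmfs_def)
  then have finP: "finite (set_pmf P)"
    using finite_set_pmf_coupling[OF P] by blast
  have in_S: "fst (fst q) \<in> S" "snd (fst q) \<in> S" "snd (snd q) \<in> S" if "q \<in> set_pmf P" for q
    using that P \<pi>1 \<pi>2 fin by (force simp: finite_pmfs_def)+
  let ?a = "\<lambda>q. d (fst (fst q)) (snd (fst q))" and ?b = "\<lambda>q. d (fst (snd q)) (snd (snd q))"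
  have "transport_cost p d \<mu> \<rho> \<le> coupling_cost p d (map_pmf (\<lambda>q. (fst (fst q), snd (snd q))) P)"
    using P \<pi>1 \<pi>2 by (intro transport_cost_le_coupling_cost) (auto simp: pmf.map_comp comp_def simp flip: P)
  also have "\<dots> = measure_pmf.expectation P (\<lambda>q. d (fst (fst q)) (snd (snd q)) powr p)"
    by simp
  also have "\<dots> \<le> measure_pmf.expectation P (\<lambda>q. (?a q + ?b q) powr p)"
  proof (rule expectation_mono_finite_support[OF finP])
    fix q
    assume q: "q \<in> set_pmf P"
    then have "d (fst (fst q)) (snd (snd q)) \<le> ?a q + ?b q"
      using triangle[OF in_S[OF q]] glued[OF q] by simp
    then show "d (fst (fst q)) (snd (snd q)) powr p \<le> (?a q + ?b q) powr p"
      using p by (intro powr_mono2) auto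
  qed
  finally have "wasserstein p d \<mu> \<rho> \<le> measure_pmf.expectation P (\<lambda>q. (?a q + ?b q) powr p) powr (1/p)"
    using p unfolding wasserstein_eq_transport_cost by (intro powr_mono2) (auto simp: transport_cost_nonneg)
  also have "\<dots> \<le> measure_pmf.expectation P (\<lambda>q. ?a q powr p) powr (1/p)
      + measure_pmf.expectation P (\<lambda>q. ?b q powr p) powr (1/p)"
    using finP p by (intro Minkowski_expectation) auto
  also have "\<dots> = coupling_cost p d \<pi>1 powr (1/p) + coupling_cost p d \<pi>2 powr (1/p)"
    by (simp add: split_beta flip: P)
  finally show ?thesis .
qed

lemma wasserstein_triangle:
  assumes "Metric_space S d" "1 \<le> p" "\<mu> \<in> finite_pmfs S" "\<nu> \<in> finite_pmfs S" "\<rho> \<in> finite_pmfs S"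
  shows "wasserstein p d \<mu> \<rho> \<le> wasserstein p d \<mu> \<nu> + wasserstein p d \<nu> \<rho>"
proof (rule field_le_epsilon)
  fix e :: real
  assume "0 < e"
  then have approx: "\<exists>\<pi>. map_pmf fst \<pi> = \<mu>' \<and> map_pmf snd \<pi> = \<nu>' \<and>
      coupling_cost p d \<pi> powr (1/p) < wasserstein p d \<mu>' \<nu>' + e/2" for \<mu>' \<nu>'
    using assms(2) by (intro exists_coupling_cost_powr_less) auto
  obtain \<pi>1 where \<pi>1: "map_pmf fst \<pi>1 = \<mu>" "map_pmf snd \<pi>1 = \<nu>"
      "coupling_cost p d \<pi>1 powr (1/p) < wasserstein p d \<mu> \<nu> + e/2"
    using approx by blast
  obtain \<pi>2 where \<pi>2: "map_pmf fst \<pi>2 = \<nu>" "map_pmf snd \<pi>2 = \<rho>"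
      "coupling_cost p d \<pi>2 powr (1/p) < wasserstein p d \<nu> \<rho> + e/2"
    using approx by blast
  then show "wasserstein p d \<mu> \<rho> \<le> wasserstein p d \<mu> \<nu> + wasserstein p d \<nu> \<rho> + e"
    using wasserstein_le_coupling_costs[OF assms \<pi>1(1,2) \<pi>2(1,2)] \<pi>1(3) \<pi>2(3) by linarith
qed

lemma transport_cost_self:
  assumes "Metric_space S d" "set_pmf \<mu> \<subseteq> S" "0 < p"
  shows "transport_cost p d \<mu> \<mu> = 0"
proof -
  have "transport_cost p d \<mu> \<mu> \<le> coupling_cost p d (map_pmf (\<lambda>x. (x, x)) \<mu>)"
    by (rule transport_cost_le_coupling_cost) (simp_all add: pmf.map_comp comp_def)
  also have "\<dots> = measure_pmf.expectation \<mu> (\<lambda>x. d x x powr p)"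
    by simp
  also have "\<dots> = 0"
    using assms by (intro integral_eq_zero_AE AE_pmfI) (auto simp: Metric_space.zero)
  finally show ?thesis
    using transport_cost_nonneg[of p d \<mu> \<mu>] by linarith
qed

lemma abs_pmf_diff_le_off_diagonal:
  assumes "map_pmf fst \<pi> = \<mu>" "map_pmf snd \<pi> = \<nu>"
  shows "\<bar>pmf \<mu> x - pmf \<nu> x\<bar> \<le> measure \<pi> {q. fst q \<noteq> snd q}"
proof -
  have "measure \<pi> (f -` {x}) \<le> measure \<pi> (g -` {x}) + measure \<pi> {q. fst q \<noteq> snd q}"
    if "f = fst \<and> g = snd \<or> f = snd \<and> g = fst" for f g :: "'a \<times> 'a \<Rightarrow> 'a"
  proof -
    have "measure \<pi> (f -` {x}) \<le> measure \<pi> (g -` {x} \<union> {q. fst q \<noteq> snd q})"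
      using that by (intro measure_pmf.finite_measure_mono) auto
    also have "\<dots> \<le> measure \<pi> (g -` {x}) + measure \<pi> {q. fst q \<noteq> snd q}"
      by (rule measure_Un_le) auto
    finally show ?thesis .
  qed
  moreover have "pmf \<mu> x = measure \<pi> (fst -` {x})" "pmf \<nu> x = measure \<pi> (snd -` {x})"
    using assms by (auto simp: pmf_map)
  ultimately show ?thesis
    by (smt (verit))
qed

lemma finite_off_diagonal_lower_bound:
  fixes f :: "'a \<Rightarrow> 'a \<Rightarrow> real"
  assumes "finite T" "\<And>x y. x \<in> T \<Longrightarrow> y \<in> T \<Longrightarrow> x \<noteq> y \<Longrightarrow> 0 < f x y"
  obtains \<delta> where "0 < \<delta>" "\<And>x y. x \<in> T \<Longrightarrow> y \<in> T \<Longrightarrow> x \<noteq> y \<Longrightarrow> \<delta> \<le> f x y"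
proof
  define D where "D = (\<lambda>(x, y). f x y) ` {(x, y) \<in> T \<times> T. x \<noteq> y}"
  have "finite D"
    unfolding D_def using assms(1) by (auto intro: finite_subset[of _ "T \<times> T"])
  then show "0 < Min (insert 1 D)"
    using assms(2) by (auto simp: D_def)
  show "Min (insert 1 D) \<le> f x y" if "x \<in> T" "y \<in> T" "x \<noteq> y" for x y
    using \<open>finite D\<close> that by (auto simp: D_def intro: Min_le rev_image_eqI[of "(x, y)"])
qed

lemma transport_cost_eq_0_imp_eq:
  assumes S: "Metric_space S d" and p: "0 < p" and fin: "\<mu> \<in> finite_pmfs S" "\<nu> \<in> finite_pmfs S"
    and cost_zero: "transport_cost p d \<mu> \<nu> = 0"
  shows "\<mu> = \<nu>"
proof (rule pmf_eqI)
  interpret Metric_space S d by (rule S)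
  define T where "T = set_pmf \<mu> \<union> set_pmf \<nu>"
  have T: "finite T" "T \<subseteq> S"
    using fin by (auto simp: finite_pmfs_def T_def)
  have pos: "0 < d x y powr p" if "x \<in> T" "y \<in> T" "x \<noteq> y" for x y
    using that T(2) nonneg[of x y] zero[of x y] by (auto simp: subset_iff)
  obtain \<delta> where \<delta>_pos: "0 < \<delta>" and \<delta>_le: "\<And>x y. x \<in> T \<Longrightarrow> y \<in> T \<Longrightarrow> x \<noteq> y \<Longrightarrow> \<delta> \<le> d x y powr p"
    using finite_off_diagonal_lower_bound[where f="\<lambda>x y. d x y powr p", OF T(1) pos] by blast
  \<comment> \<open>every coupling pays at least \<open>\<delta>\<close> per unit of mass it moves off the diagonal\<close>
  fix x
  have "\<delta> * \<bar>pmf \<mu> x - pmf \<nu> x\<bar> \<le> transport_cost p d \<mu> \<nu>"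
  proof (rule transport_cost_greatest)
    fix \<pi>
    assume \<pi>: "map_pmf fst \<pi> = \<mu>" "map_pmf snd \<pi> = \<nu>"
    then have support: "set_pmf \<pi> \<subseteq> T \<times> T"
      using set_pmf_coupling_subset by (fastforce simp: T_def)
    then have "finite (set_pmf \<pi>)"
      using T(1) by (meson finite_SigmaI finite_subset)
    have "\<delta> * \<bar>pmf \<mu> x - pmf \<nu> x\<bar> \<le> \<delta> * measure \<pi> {q. fst q \<noteq> snd q}"
      using abs_pmf_diff_le_off_diagonal[OF \<pi>] \<delta>_pos by simp
    also have "\<dots> = measure_pmf.expectation \<pi> (\<lambda>q. \<delta> * indicator {q. fst q \<noteq> snd q} q)"
      by simp
    also have "\<dots> \<le> coupling_cost p d \<pi>"
      using \<open>finite (set_pmf \<pi>)\<close> support \<delta>_le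
      by (intro expectation_mono_finite_support) (auto simp: indicator_def)
    finally show "\<delta> * \<bar>pmf \<mu> x - pmf \<nu> x\<bar> \<le> coupling_cost p d \<pi>" .
  qed
  then show "pmf \<mu> x = pmf \<nu> x"
    using cost_zero \<delta>_pos by (simp add: mult_le_0_iff)
qed

lemma Metric_space_wasserstein:
  assumes S: "Metric_space S d" and p: "1 \<le> p"
  shows "Metric_space (finite_pmfs S) (wasserstein p d)"
proof
  fix \<mu> \<nu> \<rho>
  show "0 \<le> wasserstein p d \<mu> \<nu>"
    by simp
  show "wasserstein p d \<mu> \<nu> = wasserstein p d \<nu> \<mu>"
    using transport_cost_commute[of d, OF Metric_space.commute[OF S]]
    by (simp add: wasserstein_eq_transport_cost)
  assume fin: "\<mu> \<in> finite_pmfs S" "\<nu> \<in> finite_pmfs S"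
  show "wasserstein p d \<mu> \<nu> = 0 \<longleftrightarrow> \<mu> = \<nu>"
    using transport_cost_eq_0_imp_eq[OF S _ fin, where p=p] transport_cost_self[OF S, of \<mu> p] fin p
    by (auto simp: wasserstein_eq_transport_cost finite_pmfs_def)
  assume "\<rho> \<in> finite_pmfs S"
  then show "wasserstein p d \<mu> \<rho> \<le> wasserstein p d \<mu> \<nu> + wasserstein p d \<nu> \<rho>"
    using wasserstein_triangle[OF S p fin] by blast
qed

section \<open>Marginals, products and mixtures\<close>

lemma max_dist_apply: "max_dist d1 d2 x y = max (d1 (fst x) (fst y)) (d2 (snd x) (snd y))"
  by (simp add: max_dist_def split_beta)

lemma Metric_space_max_dist:
  assumes "Metric_space X d1" "Metric_space Y d2"
  shows "Metric_space (X \<times> Y) (max_dist d1 d2)"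
proof -
  interpret X: Metric_space X d1 by fact
  interpret Y: Metric_space Y d2 by fact
  show ?thesis
  proof
    fix x y z
    show "0 \<le> max_dist d1 d2 x y"
      by (simp add: max_dist_apply le_max_iff_disj)
    show "max_dist d1 d2 x y = max_dist d1 d2 y x"
      by (simp add: max_dist_apply X.commute Y.commute)
    assume xy: "x \<in> X \<times> Y" "y \<in> X \<times> Y"
    have "max_dist d1 d2 x y = 0 \<longleftrightarrow> d1 (fst x) (fst y) = 0 \<and> d2 (snd x) (snd y) = 0"
      using X.nonneg[of "fst x" "fst y"] Y.nonneg[of "snd x" "snd y"]
      unfolding max_dist_apply by linarith
    then show "max_dist d1 d2 x y = 0 \<longleftrightarrow> x = y"
      using xy X.zero[of "fst x" "fst y"] Y.zero[of "snd x" "snd y"]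
      by (auto simp: prod_eq_iff mem_Times_iff)
    assume "z \<in> X \<times> Y"
    then show "max_dist d1 d2 x z \<le> max_dist d1 d2 x y + max_dist d1 d2 y z"
      using xy X.triangle[of "fst x" "fst y" "fst z"] Y.triangle[of "snd x" "snd y" "snd z"]
      by (auto simp: max_dist_apply mem_Times_iff)
  qed
qed

lemma transport_cost_map_pmf_le:
  assumes fin: "finite (set_pmf \<mu>)" "finite (set_pmf \<nu>)" and p: "0 \<le> p"
    and contract: "\<And>x y. 0 \<le> d' (f x) (f y)" "\<And>x y. d' (f x) (f y) \<le> d x y"
  shows "transport_cost p d' (map_pmf f \<mu>) (map_pmf f \<nu>) \<le> transport_cost p d \<mu> \<nu>"
proof (rule transport_cost_le_epsilon)
  fix e :: real
  assume "0 < e"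
  then obtain \<pi> where \<pi>: "map_pmf fst \<pi> = \<mu>" "map_pmf snd \<pi> = \<nu>"
    and cost: "coupling_cost p d \<pi> < transport_cost p d \<mu> \<nu> + e"
    by (metis less_add_same_cancel1 transport_cost_less_iff)
  have "coupling_cost p d' (map_pmf (map_prod f f) \<pi>) = measure_pmf.expectation \<pi> (\<lambda>(x, y). d' (f x) (f y) powr p)"
    by (simp add: case_prod_unfold)
  also have "\<dots> \<le> coupling_cost p d \<pi>"
    using finite_set_pmf_coupling[OF \<pi> fin] contract p
    by (intro expectation_mono_finite_support) (auto intro: powr_mono2)
  finally show "\<exists>\<pi>. map_pmf fst \<pi> = map_pmf f \<mu> \<and> map_pmf snd \<pi> = map_pmf f \<nu> \<and>
      coupling_cost p d' \<pi> \<le> transport_cost p d \<mu> \<nu> + e"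
    using \<pi> cost by (intro exI[of _ "map_pmf (map_prod f f) \<pi>"]) (auto simp: pmf.map_comp comp_def)
qed

lemma transport_cost_pair_pmf_le:
  assumes "\<And>x y. 0 \<le> d1 x y" "\<And>x y. 0 \<le> d2 x y" "0 \<le> p"
    and fin: "finite (set_pmf a)" "finite (set_pmf a')" "finite (set_pmf b)" "finite (set_pmf b')"
  shows "transport_cost p (max_dist d1 d2) (pair_pmf a b) (pair_pmf a' b')
    \<le> transport_cost p d1 a a' + transport_cost p d2 b b'"
proof (rule transport_cost_le_epsilon)
  fix e :: real
  assume "0 < e"
  then obtain \<pi>1 \<pi>2 where \<pi>1: "map_pmf fst \<pi>1 = a" "map_pmf snd \<pi>1 = a'"
      "coupling_cost p d1 \<pi>1 < transport_cost p d1 a a' + e/2"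
    and \<pi>2: "map_pmf fst \<pi>2 = b" "map_pmf snd \<pi>2 = b'"
      "coupling_cost p d2 \<pi>2 < transport_cost p d2 b b' + e/2"
    by (metis half_gt_zero less_add_same_cancel1 transport_cost_less_iff)
  have fin_pair: "finite (set_pmf (pair_pmf \<pi>1 \<pi>2))"
    using finite_set_pmf_coupling[OF \<pi>1(1,2) fin(1,2)] finite_set_pmf_coupling[OF \<pi>2(1,2) fin(3,4)]
    by simp
  define \<kappa> where "\<kappa> = map_pmf (\<lambda>(u, v). ((fst u, fst v), (snd u, snd v))) (pair_pmf \<pi>1 \<pi>2)"
  have "map_pmf fst \<kappa> = pair_pmf (map_pmf fst \<pi>1) (map_pmf fst \<pi>2)"
    "map_pmf snd \<kappa> = pair_pmf (map_pmf snd \<pi>1) (map_pmf snd \<pi>2)"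
    unfolding \<kappa>_def pmf.map_comp by (simp_all add: map_pair[symmetric] comp_def case_prod_unfold)
  then have marginals: "map_pmf fst \<kappa> = pair_pmf a b" "map_pmf snd \<kappa> = pair_pmf a' b'"
    using \<pi>1 \<pi>2 by simp_all
  have "coupling_cost p (max_dist d1 d2) \<kappa> = measure_pmf.expectation (pair_pmf \<pi>1 \<pi>2)
      (\<lambda>(u, v). max (d1 (fst u) (snd u)) (d2 (fst v) (snd v)) powr p)"
    by (simp add: \<kappa>_def case_prod_unfold max_dist_apply)
  also have "\<dots> \<le> measure_pmf.expectation (pair_pmf \<pi>1 \<pi>2)
      (\<lambda>(u, v). d1 (fst u) (snd u) powr p + d2 (fst v) (snd v) powr p)"
    using fin_pair assms(1-3)
    by (intro expectation_mono_finite_support) (auto simp: max_def)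
  also have "\<dots> = coupling_cost p d1 \<pi>1 + coupling_cost p d2 \<pi>2"
  proof -
    have "measure_pmf.expectation (pair_pmf \<pi>1 \<pi>2) (\<lambda>(u, v). d1 (fst u) (snd u) powr p) = coupling_cost p d1 \<pi>1"
      by (subst (2) map_fst_pair_pmf[of \<pi>1 \<pi>2, symmetric]) (simp add: case_prod_unfold)
    moreover have "measure_pmf.expectation (pair_pmf \<pi>1 \<pi>2) (\<lambda>(u, v). d2 (fst v) (snd v) powr p) = coupling_cost p d2 \<pi>2"
      by (subst (2) map_snd_pair_pmf[of \<pi>1 \<pi>2, symmetric]) (simp add: case_prod_unfold)
    ultimately show ?thesis
      using fin_pair by (simp add: case_prod_unfold integrable_measure_pmf_finite)
  qed
  finally show "\<exists>\<pi>. map_pmf fst \<pi> = pair_pmf a b \<and> map_pmf snd \<pi> = pair_pmf a' b' \<and>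
      coupling_cost p (max_dist d1 d2) \<pi> \<le> transport_cost p d1 a a' + transport_cost p d2 b b' + e"
    using marginals \<pi>1(3) \<pi>2(3) by (intro exI[of _ \<kappa>]) auto
qed

lemma transport_cost_mix_pmf_le:
  assumes t: "0 \<le> t" "t \<le> 1"
    and fin: "finite (set_pmf a)" "finite (set_pmf a')" "finite (set_pmf b)" "finite (set_pmf b')"
  shows "transport_cost p d (mix_pmf t a b) (mix_pmf t a' b')
    \<le> t * transport_cost p d a a' + (1 - t) * transport_cost p d b b'"
proof (rule transport_cost_le_epsilon)
  fix e :: real
  assume "0 < e"
  then obtain \<pi>1 \<pi>2 where \<pi>1: "map_pmf fst \<pi>1 = a" "map_pmf snd \<pi>1 = a'"
      "coupling_cost p d \<pi>1 < transport_cost p d a a' + e"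
    and \<pi>2: "map_pmf fst \<pi>2 = b" "map_pmf snd \<pi>2 = b'"
      "coupling_cost p d \<pi>2 < transport_cost p d b b' + e"
    by (metis less_add_same_cancel1 transport_cost_less_iff)
  have "coupling_cost p d (mix_pmf t \<pi>1 \<pi>2) = t * coupling_cost p d \<pi>1 + (1 - t) * coupling_cost p d \<pi>2"
    using finite_set_pmf_coupling[OF \<pi>1(1,2) fin(1,2)] finite_set_pmf_coupling[OF \<pi>2(1,2) fin(3,4)] t
    by (rule expectation_mix_pmf)
  also have "\<dots> \<le> t * (transport_cost p d a a' + e) + (1 - t) * (transport_cost p d b b' + e)"
    using \<pi>1(3) \<pi>2(3) t by (intro add_mono mult_left_mono) auto
  finally show "\<exists>\<pi>. map_pmf fst \<pi> = mix_pmf t a b \<and> map_pmf snd \<pi> = mix_pmf t a' b' \<and>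
      coupling_cost p d \<pi> \<le> t * transport_cost p d a a' + (1 - t) * transport_cost p d b b' + e"
    using \<pi>1 \<pi>2 by (intro exI[of _ "mix_pmf t \<pi>1 \<pi>2"]) (simp add: map_pmf_mix_pmf algebra_simps)
qed

lemma mix_pmf_in_finite_pmfs:
  "0 \<le> t \<Longrightarrow> t \<le> 1 \<Longrightarrow> a \<in> finite_pmfs S \<Longrightarrow> b \<in> finite_pmfs S \<Longrightarrow> mix_pmf t a b \<in> finite_pmfs S"
  by (simp add: finite_pmfs_def set_pmf_mix_pmf)

lemma transport_cost_mix_pmf_shift_le:
  assumes S: "Metric_space S d" and p: "0 < p" and ab: "a \<in> finite_pmfs S" "b \<in> finite_pmfs S"
    and ts: "0 \<le> t" "t \<le> s" "s \<le> 1"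
  shows "transport_cost p d (mix_pmf s a b) (mix_pmf t a b) \<le> (s - t) * transport_cost p d a b"
proof (cases "t = 1")
  case True
  then show ?thesis
    using ts transport_cost_self[OF S _ p, of a] ab(1) by (simp add: finite_pmfs_def)
next
  case False
  define c where "c = mix_pmf t a b"
  define u where "u = (s - t) / (1 - t)"
  have c: "c \<in> finite_pmfs S"
    using ts ab by (simp add: c_def mix_pmf_in_finite_pmfs)
  have u: "0 \<le> u" "u \<le> 1" "u * (1 - t) = s - t"
    using ts False by (auto simp: u_def field_simps)
  have fin: "finite (set_pmf a)" "finite (set_pmf b)" "finite (set_pmf c)"
    using ab c by (simp_all add: finite_pmfs_def)
  have "transport_cost p d (mix_pmf s a b) (mix_pmf t a b) = transport_cost p d (mix_pmf u a c) (mix_pmf u c c)"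
    using ts False by (simp add: mix_pmf_mix_pmf[of t s] u_def c_def)
  also have "\<dots> \<le> u * transport_cost p d a c"
    using transport_cost_mix_pmf_le[OF u(1,2) fin(1,3,3,3), of p d] transport_cost_self[OF S _ p, of c] c
    by (simp add: finite_pmfs_def)
  also have "transport_cost p d a c = transport_cost p d (mix_pmf t a a) (mix_pmf t a b)"
    by (simp add: c_def)
  also have "\<dots> \<le> (1 - t) * transport_cost p d a b"
    using transport_cost_mix_pmf_le[OF ts(1) _ fin(1,1,1,2), of p d] transport_cost_self[OF S _ p, of a] ab(1) ts
    by (simp add: finite_pmfs_def)
  finally show ?thesis
    using u by (simp add: mult_left_mono mult.assoc[symmetric])
qed

lemma transport_cost_mix_pmf_param_le:
  assumes S: "Metric_space S d" and "0 < p" "a \<in> finite_pmfs S" "b \<in> finite_pmfs S"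
    and "0 \<le> s" "s \<le> 1" "0 \<le> t" "t \<le> 1"
  shows "transport_cost p d (mix_pmf s a b) (mix_pmf t a b) \<le> \<bar>s - t\<bar> * transport_cost p d a b"
proof (cases "t \<le> s")
  case True
  then show ?thesis
    using transport_cost_mix_pmf_shift_le[OF assms(1-4), of t s] assms by simp
next
  case False
  then show ?thesis
    using transport_cost_mix_pmf_shift_le[OF assms(1-4), of s t] assms
      transport_cost_commute[of d, OF Metric_space.commute[OF S]] by simp
qed

lemma wasserstein_map_pmf_le:
  assumes "finite (set_pmf \<mu>)" "finite (set_pmf \<nu>)" "0 < p"
    and "\<And>x y. 0 \<le> d' (f x) (f y)" "\<And>x y. d' (f x) (f y) \<le> d x y"
  shows "wasserstein p d' (map_pmf f \<mu>) (map_pmf f \<nu>) \<le> wasserstein p d \<mu> \<nu>"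
  using assms by (intro wasserstein_mono transport_cost_map_pmf_le) auto

lemma wasserstein_pair_pmf_le:
  assumes "\<And>x y. 0 \<le> d1 x y" "\<And>x y. 0 \<le> d2 x y" "0 < p"
    and "finite (set_pmf a)" "finite (set_pmf a')" "finite (set_pmf b)" "finite (set_pmf b')"
  shows "wasserstein p (max_dist d1 d2) (pair_pmf a b) (pair_pmf a' b')
    \<le> 2 powr (1/p) * max (wasserstein p d1 a a') (wasserstein p d2 b b')"
proof -
  define m where "m = max (wasserstein p d1 a a') (wasserstein p d2 b b')"
  have "0 \<le> m"
    by (simp add: m_def le_max_iff_disj)
  have "transport_cost p d1 a a' \<le> m powr p" "transport_cost p d2 b b' \<le> m powr p"
    by (subst wasserstein_le_iff[OF \<open>0 \<le> m\<close> assms(3), symmetric], simp add: m_def)+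
  then have "transport_cost p (max_dist d1 d2) (pair_pmf a b) (pair_pmf a' b') \<le> (2 powr (1/p) * m) powr p"
    using transport_cost_pair_pmf_le[of d1 d2 p a a' b b'] assms \<open>0 \<le> m\<close>
    by (fastforce simp: powr_mult powr_powr)
  then show ?thesis
    using \<open>0 \<le> m\<close> assms(3) by (simp add: wasserstein_le_iff m_def)
qed

lemma wasserstein_mix_pmf_le:
  assumes S: "Metric_space S d" and p: "1 \<le> p"
    and fin: "\<mu> \<in> finite_pmfs S" "\<nu> \<in> finite_pmfs S" "a \<in> finite_pmfs S" "b \<in> finite_pmfs S"
    and s: "0 \<le> s" "s \<le> 1" and t: "0 \<le> t" "t \<le> 1"
  shows "wasserstein p d (mix_pmf t \<mu> a) (mix_pmf s \<nu> b)
    \<le> \<bar>t - s\<bar> powr (1/p) * wasserstein p d \<mu> a + max (wasserstein p d \<mu> \<nu>) (wasserstein p d a b)"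
proof -
  have p0: "0 < p"
    using p by simp
  have finite: "finite (set_pmf c)" if "c \<in> finite_pmfs S" for c
    using that by (simp add: finite_pmfs_def)
  have "wasserstein p d (mix_pmf t \<mu> a) (mix_pmf s \<mu> a) \<le> (\<bar>t - s\<bar> * transport_cost p d \<mu> a) powr (1/p)"
    unfolding wasserstein_eq_transport_cost using p s t fin
    by (intro powr_mono2 transport_cost_mix_pmf_param_le[OF S]) (auto simp: transport_cost_nonneg)
  also have "\<dots> = \<bar>t - s\<bar> powr (1/p) * wasserstein p d \<mu> a"
    by (simp add: powr_mult transport_cost_nonneg wasserstein_eq_transport_cost)
  finally have shift_weight: "wasserstein p d (mix_pmf t \<mu> a) (mix_pmf s \<mu> a)
      \<le> \<bar>t - s\<bar> powr (1/p) * wasserstein p d \<mu> a" .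
  define m where "m = max (wasserstein p d \<mu> \<nu>) (wasserstein p d a b)"
  have "0 \<le> m"
    by (simp add: m_def le_max_iff_disj)
  have "transport_cost p d (mix_pmf s \<mu> a) (mix_pmf s \<nu> b)
      \<le> s * transport_cost p d \<mu> \<nu> + (1 - s) * transport_cost p d a b"
    using s fin by (intro transport_cost_mix_pmf_le) (auto intro: finite)
  also have "\<dots> \<le> m powr p"
  proof (rule convex_bound_le)
    show "transport_cost p d \<mu> \<nu> \<le> m powr p" "transport_cost p d a b \<le> m powr p"
      by (subst wasserstein_le_iff[OF \<open>0 \<le> m\<close> p0, symmetric], simp add: m_def)+
  qed (use s in auto)
  finally have shift_measures: "wasserstein p d (mix_pmf s \<mu> a) (mix_pmf s \<nu> b) \<le> m"
    unfolding wasserstein_le_iff[OF \<open>0 \<le> m\<close> p0] .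
  have "wasserstein p d (mix_pmf t \<mu> a) (mix_pmf s \<nu> b)
      \<le> wasserstein p d (mix_pmf t \<mu> a) (mix_pmf s \<mu> a) + wasserstein p d (mix_pmf s \<mu> a) (mix_pmf s \<nu> b)"
    using fin s t by (intro wasserstein_triangle[OF S p] mix_pmf_in_finite_pmfs)
  with shift_weight shift_measures show ?thesis
    by (simp add: m_def)
qed

section \<open>Metric thickenings of products\<close>

lemma Lipschitz_imp_continuous_map_mtopology:
  assumes "Metric_space M d" "Metric_space M' d'" "f ` M \<subseteq> M'"
    and Lipschitz: "\<And>x y. x \<in> M \<Longrightarrow> y \<in> M \<Longrightarrow> d' (f x) (f y) \<le> C * d x y"
  shows "continuous_map (Metric_space.mtopology M d) (Metric_space.mtopology M' d') f"
proof -
  interpret Metric_space M d by fact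
  show ?thesis
    unfolding metric_continuous_map[OF assms(2)]
  proof (intro conjI ballI allI impI exI)
    fix x and e :: real
    assume "x \<in> M" "0 < e"
    then show "0 < e / (\<bar>C\<bar> + 1)"
      by simp
    fix y
    assume y: "y \<in> M \<and> d x y < e / (\<bar>C\<bar> + 1)"
    have "d' (f x) (f y) \<le> (\<bar>C\<bar> + 1) * d x y"
    proof -
      have "C * d x y \<le> (\<bar>C\<bar> + 1) * d x y"
        using nonneg[of x y] by (intro mult_right_mono) auto
      then show ?thesis
        using Lipschitz[OF \<open>x \<in> M\<close>] y by fastforce
    qed
    also have "\<dots> < e"
      using y by (simp add: pos_less_divide_eq mult.commute)
    finally show "d' (f x) (f y) < e" .
  qed (use assms(3) in simp)
qed

lemma continuous_map_prod_top_of_set_mtopology: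
  fixes f :: "real \<times> 'a \<Rightarrow> 'b"
  assumes A: "Metric_space A d" and B: "Metric_space B d'"
    and into: "\<And>t x. t \<in> I \<Longrightarrow> x \<in> A \<Longrightarrow> f (t, x) \<in> B"
    and close: "\<And>t x e. t \<in> I \<Longrightarrow> x \<in> A \<Longrightarrow> 0 < e \<Longrightarrow>
      \<exists>\<delta>>0. \<forall>s y. s \<in> I \<longrightarrow> y \<in> A \<longrightarrow> \<bar>t - s\<bar> < \<delta> \<longrightarrow> d x y < \<delta> \<longrightarrow> d' (f (t, x)) (f (s, y)) < e"
  shows "continuous_map (prod_topology (top_of_set I) (Metric_space.mtopology A d)) (Metric_space.mtopology B d') f"
proof -
  interpret A: Metric_space A d by fact
  interpret B: Metric_space B d' by fact
  show ?thesis
    unfolding B.continuous_map_to_metric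
  proof (intro ballI allI impI)
    fix z and e :: real
    assume "z \<in> topspace (prod_topology (top_of_set I) A.mtopology)" "0 < e"
    then obtain t x where z: "z = (t, x)" "t \<in> I" "x \<in> A" and "0 < e"
      by auto
    then obtain \<delta> where "0 < \<delta>"
      and \<delta>: "\<And>s y. s \<in> I \<Longrightarrow> y \<in> A \<Longrightarrow> \<bar>t - s\<bar> < \<delta> \<Longrightarrow> d x y < \<delta> \<Longrightarrow> d' (f (t, x)) (f (s, y)) < e"
      using close by meson
    have "openin (prod_topology (top_of_set I) A.mtopology) ((I \<inter> ball t \<delta>) \<times> A.mball x \<delta>)"
      unfolding openin_prod_Times_iff by (auto intro!: openin_open_Int)
    moreover have "z \<in> (I \<inter> ball t \<delta>) \<times> A.mball x \<delta>"
      using z \<open>0 < \<delta>\<close> by auto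
    moreover have "f w \<in> B.mball (f z) e" if "w \<in> (I \<inter> ball t \<delta>) \<times> A.mball x \<delta>" for w
      using that z into \<delta> by (auto simp: dist_real_def)
    ultimately show "\<exists>U. openin (prod_topology (top_of_set I) A.mtopology) U \<and> z \<in> U \<and> (\<forall>w\<in>U. f w \<in> B.mball (f z) e)"
      by blast
  qed
qed

lemma continuous_map_mix_pmf_homotopy:
  fixes g :: "'a pmf \<Rightarrow> 'a pmf"
  assumes S: "Metric_space S d" and p: "1 \<le> p" and A: "A \<subseteq> finite_pmfs S"
    and g: "continuous_map (Metric_space.mtopology A (wasserstein p d))
      (Metric_space.mtopology A (wasserstein p d)) g"
    and mix_in: "\<And>t \<mu>. t \<in> {0..1} \<Longrightarrow> \<mu> \<in> A \<Longrightarrow> mix_pmf t \<mu> (g \<mu>) \<in> A"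
  shows "continuous_map (prod_topology (top_of_set {0..1::real}) (Metric_space.mtopology A (wasserstein p d)))
    (Metric_space.mtopology A (wasserstein p d)) (\<lambda>(t, \<mu>). mix_pmf t \<mu> (g \<mu>))"
proof -
  interpret A: Metric_space A "wasserstein p d"
    by (rule Metric_space.subspace[OF Metric_space_wasserstein[OF S p] A])
  have gA: "g \<mu> \<in> A" if "\<mu> \<in> A" for \<mu>
    using g that by (auto simp: continuous_map_def)
  show ?thesis
  proof (rule continuous_map_prod_top_of_set_mtopology[OF A.Metric_space_axioms A.Metric_space_axioms])
    fix t e :: real and \<mu>
    assume t: "t \<in> {0..1}" and \<mu>: "\<mu> \<in> A" and e: "0 < e"
    define C where "C = wasserstein p d \<mu> (g \<mu>)"
    have "0 \<le> C"
      by (simp add: C_def)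
    obtain \<delta>g where "0 < \<delta>g"
      and \<delta>g: "\<And>\<nu>. \<nu> \<in> A \<Longrightarrow> wasserstein p d \<mu> \<nu> < \<delta>g \<Longrightarrow> wasserstein p d (g \<mu>) (g \<nu>) < e/2"
      using g \<mu> e unfolding A.metric_continuous_map[OF A.Metric_space_axioms] by (meson half_gt_zero)
    define \<delta> where "\<delta> = min (min \<delta>g (e/2)) ((e / (2 * (C + 1))) powr p)"
    have "0 < \<delta>"
      using \<open>0 < \<delta>g\<close> e \<open>0 \<le> C\<close> by (simp add: \<delta>_def)
    moreover have "wasserstein p d (mix_pmf t \<mu> (g \<mu>)) (mix_pmf s \<nu> (g \<nu>)) < e"
      if s: "s \<in> {0..1}" "\<bar>t - s\<bar> < \<delta>" and \<nu>: "\<nu> \<in> A" "wasserstein p d \<mu> \<nu> < \<delta>" for s \<nu>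
    proof -
      have "\<bar>t - s\<bar> powr (1/p) < (((e / (2 * (C + 1))) powr p) powr (1/p))"
        using s p by (intro powr_less_mono2) (auto simp: \<delta>_def)
      then have "\<bar>t - s\<bar> powr (1/p) * C \<le> e / (2 * (C + 1)) * C"
        using \<open>0 \<le> C\<close> e p by (intro mult_right_mono) (auto simp: powr_powr)
      also have "\<dots> < e/2"
        using e \<open>0 \<le> C\<close> by (simp add: field_simps)
      finally have "\<bar>t - s\<bar> powr (1/p) * C < e/2" .
      moreover have "wasserstein p d (mix_pmf t \<mu> (g \<mu>)) (mix_pmf s \<nu> (g \<nu>))
          \<le> \<bar>t - s\<bar> powr (1/p) * C + max (wasserstein p d \<mu> \<nu>) (wasserstein p d (g \<mu>) (g \<nu>))"
        unfolding C_def using \<mu> \<nu>(1) gA A s t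
        by (intro wasserstein_mix_pmf_le[OF S p]) auto
      moreover have "wasserstein p d \<mu> \<nu> < e/2" "wasserstein p d (g \<mu>) (g \<nu>) < e/2"
        using \<nu> \<delta>g by (auto simp: \<delta>_def)
      ultimately show ?thesis
        by simp
    qed
    ultimately show "\<exists>\<delta>>0. \<forall>s \<nu>. s \<in> {0..1} \<longrightarrow> \<nu> \<in> A \<longrightarrow> \<bar>t - s\<bar> < \<delta> \<longrightarrow> wasserstein p d \<mu> \<nu> < \<delta> \<longrightarrow>
        wasserstein p d ((\<lambda>(t, \<mu>). mix_pmf t \<mu> (g \<mu>)) (t, \<mu>)) ((\<lambda>(t, \<mu>). mix_pmf t \<mu> (g \<mu>)) (s, \<nu>)) < e"
      by auto
  qed (use mix_in in auto)
qed

lemma metric_thickening_subset_finite_pmfs: "K \<subseteq> Pow M \<Longrightarrow> metric_thickening K \<subseteq> finite_pmfs M"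
  by (auto simp: metric_thickening_def finite_pmfs_def)

lemma Metric_space_metric_thickening:
  "Metric_space M d \<Longrightarrow> 1 \<le> p \<Longrightarrow> K \<subseteq> Pow M \<Longrightarrow> Metric_space (metric_thickening K) (wasserstein p d)"
  by (rule Metric_space.subspace[OF Metric_space_wasserstein metric_thickening_subset_finite_pmfs])

lemma continuous_map_marginals:
  assumes M1: "Metric_space M1 d1" and M2: "Metric_space M2 d2" and p: "1 \<le> p"
    and K: "K \<subseteq> Pow (M1 \<times> M2)" "K1 \<subseteq> Pow M1" "K2 \<subseteq> Pow M2"
    and image: "\<And>\<sigma>. \<sigma> \<in> K \<Longrightarrow> fst ` \<sigma> \<in> K1" "\<And>\<sigma>. \<sigma> \<in> K \<Longrightarrow> snd ` \<sigma> \<in> K2"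
  shows "continuous_map (thickening_top p (max_dist d1 d2) K) (prod_thickening_top p d1 K1 d2 K2)
    (\<lambda>\<mu>. (map_pmf fst \<mu>, map_pmf snd \<mu>))"
  unfolding thickening_top_def prod_thickening_top_def
proof (rule Lipschitz_imp_continuous_map_mtopology)
  show "Metric_space (metric_thickening K) (wasserstein p (max_dist d1 d2))"
    by (rule Metric_space_metric_thickening[OF Metric_space_max_dist[OF M1 M2] p K(1)])
  show "Metric_space (metric_thickening K1 \<times> metric_thickening K2) (max_dist (wasserstein p d1) (wasserstein p d2))"
    by (rule Metric_space_max_dist[OF Metric_space_metric_thickening[OF M1 p K(2)] Metric_space_metric_thickening[OF M2 p K(3)]])
  show "(\<lambda>\<mu>. (map_pmf fst \<mu>, map_pmf snd \<mu>)) ` metric_thickening K \<subseteq> metric_thickening K1 \<times> metric_thickening K2"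
    using image by (auto simp: metric_thickening_def)
  fix \<mu> \<nu>
  assume "\<mu> \<in> metric_thickening K" "\<nu> \<in> metric_thickening K"
  then show "max_dist (wasserstein p d1) (wasserstein p d2) (map_pmf fst \<mu>, map_pmf snd \<mu>) (map_pmf fst \<nu>, map_pmf snd \<nu>)
      \<le> 1 * wasserstein p (max_dist d1 d2) \<mu> \<nu>"
    using p Metric_space.nonneg[OF M1] Metric_space.nonneg[OF M2]
    by (auto simp: metric_thickening_def max_dist_apply intro!: wasserstein_map_pmf_le)
qed

lemma continuous_map_pair_pmf:
  assumes M1: "Metric_space M1 d1" and M2: "Metric_space M2 d2" and p: "1 \<le> p"
    and K: "K \<subseteq> Pow (M1 \<times> M2)" "K1 \<subseteq> Pow M1" "K2 \<subseteq> Pow M2"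
    and Times: "\<And>\<sigma>1 \<sigma>2. \<sigma>1 \<in> K1 \<Longrightarrow> \<sigma>2 \<in> K2 \<Longrightarrow> \<sigma>1 \<times> \<sigma>2 \<in> K"
  shows "continuous_map (prod_thickening_top p d1 K1 d2 K2) (thickening_top p (max_dist d1 d2) K)
    (\<lambda>(a, b). pair_pmf a b)"
  unfolding thickening_top_def prod_thickening_top_def
proof (rule Lipschitz_imp_continuous_map_mtopology)
  show "Metric_space (metric_thickening K) (wasserstein p (max_dist d1 d2))"
    by (rule Metric_space_metric_thickening[OF Metric_space_max_dist[OF M1 M2] p K(1)])
  show "Metric_space (metric_thickening K1 \<times> metric_thickening K2) (max_dist (wasserstein p d1) (wasserstein p d2))"
    by (rule Metric_space_max_dist[OF Metric_space_metric_thickening[OF M1 p K(2)] Metric_space_metric_thickening[OF M2 p K(3)]])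
  show "(\<lambda>(a, b). pair_pmf a b) ` (metric_thickening K1 \<times> metric_thickening K2) \<subseteq> metric_thickening K"
    using Times by (auto simp: metric_thickening_def)
  fix q q'
  assume "q \<in> metric_thickening K1 \<times> metric_thickening K2" "q' \<in> metric_thickening K1 \<times> metric_thickening K2"
  then show "wasserstein p (max_dist d1 d2) ((\<lambda>(a, b). pair_pmf a b) q) ((\<lambda>(a, b). pair_pmf a b) q')
      \<le> 2 powr (1/p) * max_dist (wasserstein p d1) (wasserstein p d2) q q'"
    using p Metric_space.nonneg[OF M1] Metric_space.nonneg[OF M2]
    by (auto simp: metric_thickening_def max_dist_apply intro!: wasserstein_pair_pmf_le)
qed

lemma homotopy_equivalent_thickening_product:
  fixes K :: "('a \<times> 'b) set set" and K1 :: "'a set set" and K2 :: "'b set set"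
  assumes M1: "Metric_space M1 d1" and M2: "Metric_space M2 d2" and p: "1 \<le> p"
    and K: "K \<subseteq> Pow (M1 \<times> M2)" "K1 \<subseteq> Pow M1" "K2 \<subseteq> Pow M2"
    and image: "\<And>\<sigma>. \<sigma> \<in> K \<Longrightarrow> fst ` \<sigma> \<in> K1" "\<And>\<sigma>. \<sigma> \<in> K \<Longrightarrow> snd ` \<sigma> \<in> K2"
    and Times: "\<And>\<sigma>1 \<sigma>2. \<sigma>1 \<in> K1 \<Longrightarrow> \<sigma>2 \<in> K2 \<Longrightarrow> \<sigma>1 \<times> \<sigma>2 \<in> K"
  shows "thickening_top p (max_dist d1 d2) K homotopy_equivalent_space prod_thickening_top p d1 K1 d2 K2"
proof -
  define F where "F \<mu> = (map_pmf fst \<mu>, map_pmf snd \<mu>)" for \<mu> :: "('a \<times> 'b) pmf"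
  define G where "G = (\<lambda>(a :: 'a pmf, b :: 'b pmf). pair_pmf a b)"
  have F: "continuous_map (thickening_top p (max_dist d1 d2) K) (prod_thickening_top p d1 K1 d2 K2) F"
    unfolding F_def by (rule continuous_map_marginals[OF M1 M2 p K image])
  have G: "continuous_map (prod_thickening_top p d1 K1 d2 K2) (thickening_top p (max_dist d1 d2) K) G"
    unfolding G_def by (rule continuous_map_pair_pmf[OF M1 M2 p K Times])
  have mix_in: "mix_pmf t \<mu> ((G \<circ> F) \<mu>) \<in> metric_thickening K" if "t \<in> {0..1}" "\<mu> \<in> metric_thickening K" for t \<mu>
  proof -
    let ?\<sigma> = "set_pmf \<mu>"
    have "?\<sigma> \<in> K" "fst ` ?\<sigma> \<times> snd ` ?\<sigma> \<in> K" "finite ?\<sigma>"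
      using that Times image by (auto simp: metric_thickening_def)
    moreover have "?\<sigma> \<union> fst ` ?\<sigma> \<times> snd ` ?\<sigma> = fst ` ?\<sigma> \<times> snd ` ?\<sigma>"
      by force
    ultimately show ?thesis
      using that by (simp add: metric_thickening_def set_pmf_mix_pmf F_def G_def)
  qed
  have "homotopic_with (\<lambda>x. True) (thickening_top p (max_dist d1 d2) K) (thickening_top p (max_dist d1 d2) K) (G \<circ> F) id"
    unfolding homotopic_with_def
    by (intro exI[of _ "\<lambda>(t, \<mu>). mix_pmf t \<mu> ((G \<circ> F) \<mu>)"] conjI)
      (use continuous_map_mix_pmf_homotopy[OF Metric_space_max_dist[OF M1 M2] p
          metric_thickening_subset_finite_pmfs[OF K(1)] _ mix_in] continuous_map_compose[OF F G]
        in \<open>auto simp: thickening_top_def comp_def\<close>)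
  moreover have "homotopic_with (\<lambda>x. True) (prod_thickening_top p d1 K1 d2 K2) (prod_thickening_top p d1 K1 d2 K2) (F \<circ> G) id"
    using continuous_map_compose[OF G F]
    by (intro homotopic_with_equal) (auto simp: F_def G_def map_fst_pair_pmf map_snd_pair_pmf)
  ultimately show ?thesis
    unfolding homotopy_equivalent_space_def using F G by blast
qed

lemma homotopy_equivalent_VR_thickening_product:
  assumes "Metric_space M1 d1" "Metric_space M2 d2" "1 \<le> p"
  shows "thickening_top p (max_dist d1 d2) (VR_complex (M1 \<times> M2) (max_dist d1 d2) r)
    homotopy_equivalent_space prod_thickening_top p d1 (VR_complex M1 d1 r) d2 (VR_complex M2 d2 r)"
  by (rule homotopy_equivalent_thickening_product[OF assms]) (auto simp: VR_complex_def max_dist_apply)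

lemma metric_ball_max_dist:
  "metric_ball cl (M1 \<times> M2) (max_dist d1 d2) q r = metric_ball cl M1 d1 (fst q) r \<times> metric_ball cl M2 d2 (snd q) r"
  by (cases cl) (auto simp: metric_ball_def max_dist_apply)

lemma homotopy_equivalent_Cech_thickening_product:
  assumes "Metric_space M1 d1" "Metric_space M2 d2" "1 \<le> p"
  shows "thickening_top p (max_dist d1 d2) (Cech_complex cl (M1 \<times> M2) (max_dist d1 d2) r)
    homotopy_equivalent_space prod_thickening_top p d1 (Cech_complex cl M1 d1 r) d2 (Cech_complex cl M2 d2 r)"
proof (rule homotopy_equivalent_thickening_product[OF assms])
  fix \<sigma>
  assume \<sigma>: "\<sigma> \<in> Cech_complex cl (M1 \<times> M2) (max_dist d1 d2) r"
  then obtain z where "z \<in> (\<Inter>q\<in>\<sigma>. metric_ball cl (M1 \<times> M2) (max_dist d1 d2) q r)"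
    by (auto simp: Cech_complex_def)
  then have "fst z \<in> (\<Inter>x\<in>fst ` \<sigma>. metric_ball cl M1 d1 x r)" "snd z \<in> (\<Inter>y\<in>snd ` \<sigma>. metric_ball cl M2 d2 y r)"
    by (auto simp: metric_ball_max_dist)
  with \<sigma> show "fst ` \<sigma> \<in> Cech_complex cl M1 d1 r" "snd ` \<sigma> \<in> Cech_complex cl M2 d2 r"
    by (auto simp: Cech_complex_def simp del: INT_iff)
next
  fix \<sigma>1 \<sigma>2
  assume "\<sigma>1 \<in> Cech_complex cl M1 d1 r" "\<sigma>2 \<in> Cech_complex cl M2 d2 r"
  then obtain z1 z2 where "z1 \<in> (\<Inter>x\<in>\<sigma>1. metric_ball cl M1 d1 x r)" "z2 \<in> (\<Inter>y\<in>\<sigma>2. metric_ball cl M2 d2 y r)"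
    by (auto simp: Cech_complex_def)
  then have "(z1, z2) \<in> (\<Inter>q\<in>\<sigma>1 \<times> \<sigma>2. metric_ball cl (M1 \<times> M2) (max_dist d1 d2) q r)"
    by (auto simp: metric_ball_max_dist)
  then have "(\<Inter>q\<in>\<sigma>1 \<times> \<sigma>2. metric_ball cl (M1 \<times> M2) (max_dist d1 d2) q r) \<noteq> {}"
    by blast
  with \<open>\<sigma>1 \<in> _\<close> \<open>\<sigma>2 \<in> _\<close> show "\<sigma>1 \<times> \<sigma>2 \<in> Cech_complex cl (M1 \<times> M2) (max_dist d1 d2) r"
    by (simp add: Cech_complex_def Sigma_mono)
qed (auto simp: Cech_complex_def)

theorem corollary5p2:
  fixes M1 :: "'a set" and d1 :: "'a \<Rightarrow> 'a \<Rightarrow> real"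
    and M2 :: "'b set" and d2 :: "'b \<Rightarrow> 'b \<Rightarrow> real"
    and p :: real and r :: ereal and cl :: bool
  assumes "Metric_space M1 d1" and "Metric_space M2 d2"
    and "1 \<le> p" and "0 \<le> r"
  shows "(thickening_top p (max_dist d1 d2) (VR_complex (M1 \<times> M2) (max_dist d1 d2) r))
         homotopy_equivalent_space
           (prod_thickening_top p d1 (VR_complex M1 d1 r) d2 (VR_complex M2 d2 r))
       \<and> (thickening_top p (max_dist d1 d2) (Cech_complex cl (M1 \<times> M2) (max_dist d1 d2) r))
         homotopy_equivalent_space
           (prod_thickening_top p d1 (Cech_complex cl M1 d1 r) d2 (Cech_complex cl M2 d2 r))"
  using homotopy_equivalent_VR_thickening_product[OF assms(1-3)]
    homotopy_equivalent_Cech_thickening_product[OF assms(1-3)] by blast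

end
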